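(* Let $G(V,E)$ be any graph, $p\in(0,1)$, and let $\mathrm{OPT}=\mathbb{E}[\mu(G_p)]$. Then $G$ contains a $\lfloor 1/p\rfloor$-matching with at least $(\lfloor 1/p\rfloor-1)\cdot \mathrm{OPT}$ edges.
   Context: A realization $G_p$ of $G$ is the random subgraph obtained by keeping each edge of $G$ independently with probability $p$; $\mu(X)$ is the maximum matching size of a graph $X$. For an integer $b\ge 1$, a (simple) $b$-matching in $G$ is a subset of edges of $G$ such that every vertex is incident to at most $b$ of them; its size is its number of edges. *)

theory Defs
  imports Complex_Main
begin

definition simple_graph :: "'a set \<Rightarrow> 'a set set \<Rightarrow> bool" where
  "simple_graph V E \<longleftrightarrow> finite V \<and> (\<forall>e\<in>E. e \<subseteq> V \<and> card e = 2)"

definition b_matching :: "nat \<Rightarrow> 'a set set \<Rightarrow> bool" where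
  "b_matching b M \<longleftrightarrow> (\<forall>v. card {e\<in>M. v \<in> e} \<le> b)"

definition matching :: "'a set set \<Rightarrow> bool" where
  "matching M \<longleftrightarrow> (\<forall>v. card {e\<in>M. v \<in> e} \<le> 1)"

definition mu :: "'a set set \<Rightarrow> nat" where
  "mu X = Max {card M | M. M \<subseteq> X \<and> matching M}"

text \<open>Expected maximum matching size of the realization G_p: each edge kept
  independently with probability p.\<close>
definition expected_mu :: "'a set set \<Rightarrow> real \<Rightarrow> real" where
  "expected_mu E p = (\<Sum>F\<in>Pow E. p ^ card F * (1 - p) ^ card (E - F) * real (mu F))"

end

theory Submission imports Defs "HOL-Library.FuncSet" begin

text \<open>Colour every edge independently with colour \<open>i \<in> {1..b}\<close> with probability \<open>p\<close> each
  and with the dummy colour \<open>0\<close> otherwise (possible since \<open>b p \<le> 1\<close> for \<open>b = \<lfloor>1/p\<rfloor>\<close>).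
  Each colour class is distributed exactly as \<open>G\<^sub>p\<close>, so the expected total size of maximum
  matchings of the \<open>b\<close> classes is \<open>b \<cdot> OPT\<close>, and some colouring attains at least this.
  The classes are disjoint, so the union of their maximum matchings is a \<open>b\<close>-matching;
  this even yields \<open>b \<cdot> OPT \<ge> (b - 1) \<cdot> OPT\<close> edges.\<close>

lemma ex_matching_card_mu:
  assumes "finite X"
  shows "\<exists>N\<subseteq>X. matching N \<and> card N = mu X"
proof -
  let ?S = "{card M | M. M \<subseteq> X \<and> matching M}"
  have "finite ?S" using assms by (simp add: finite_image_set)
  moreover have "card {} \<in> ?S" by (force simp: matching_def)
  ultimately have "mu X \<in> ?S" unfolding mu_def by (intro Max_in) auto
  thus ?thesis by auto
qed

lemma ex_b_matching_colour_classes: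
  assumes "finite E"
  shows "\<exists>M\<subseteq>E. b_matching b M \<and> card M = (\<Sum>i\<in>{1..b}. mu {e\<in>E. c e = i})"
proof -
  obtain N where N: "\<And>i. N i \<subseteq> {e\<in>E. c e = i}" "\<And>i. matching (N i)"
    "\<And>i. card (N i) = mu {e\<in>E. c e = i}"
    using ex_matching_card_mu[of "{e\<in>E. c e = _}"] assms by simp metis
  have fin: "finite (N i)" for i by (rule finite_subset[OF N(1)]) (use assms in simp)
  have disj: "i \<noteq> j \<Longrightarrow> N i \<inter> N j = {}" for i j using N(1) by blast
  define M where "M = (\<Union>i\<in>{1..b}. N i)"
  have "card M = (\<Sum>i\<in>{1..b}. card (N i))"
    unfolding M_def using fin disj by (intro card_UN_disjoint) auto
  moreover have "card {e\<in>M. v \<in> e} \<le> b" for v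
  proof -
    have "{e\<in>M. v \<in> e} = (\<Union>i\<in>{1..b}. {e\<in>N i. v \<in> e})" unfolding M_def by blast
    hence "card {e\<in>M. v \<in> e} = (\<Sum>i\<in>{1..b}. card {e\<in>N i. v \<in> e})"
      using fin disj by (simp add: card_UN_disjoint disjoint_iff)
    also have "\<dots> \<le> (\<Sum>i\<in>{1..b}. 1)"
      using N(2) by (intro sum_mono) (auto simp: matching_def)
    finally show ?thesis by simp
  qed
  moreover have "M \<subseteq> E" unfolding M_def using N(1) by blast
  ultimately show ?thesis using N(3) by (auto simp: b_matching_def)
qed

lemma ex_ge_weighted_average:
  fixes w g :: "'a \<Rightarrow> real"
  assumes "finite A" "A \<noteq> {}" "\<And>x. x \<in> A \<Longrightarrow> 0 \<le> w x" "sum w A = 1"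
  shows "\<exists>x\<in>A. (\<Sum>y\<in>A. w y * g y) \<le> g x"
proof -
  have "Max (g ` A) \<in> g ` A" using assms(1,2) by simp
  then obtain x where x: "x \<in> A" "g x = Max (g ` A)" by auto
  have "(\<Sum>y\<in>A. w y * g y) \<le> (\<Sum>y\<in>A. w y * g x)"
    using assms(1,3) x by (intro sum_mono mult_left_mono) auto
  also have "\<dots> = g x" using assms(4) by (simp add: sum_distrib_right[symmetric])
  finally show ?thesis using x(1) by blast
qed

text \<open>Under the product weight \<open>\<Prod>e. q (c e)\<close> on colourings \<open>c : E \<rightarrow> C\<close>, the class of
  colour \<open>i\<close> is a random subset keeping each edge with weight \<open>q i\<close>.\<close>

lemma sum_prod_weight_colour_class:
  fixes q :: "'c \<Rightarrow> real" and f :: "'x set \<Rightarrow> real"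
  assumes "finite E" "finite C" "i \<in> C"
  shows "(\<Sum>c\<in>PiE E (\<lambda>_. C). (\<Prod>e\<in>E. q (c e)) * f {e\<in>E. c e = i})
       = (\<Sum>F\<in>Pow E. q i ^ card F * (\<Sum>j\<in>C - {i}. q j) ^ card (E - F) * f F)"
proof -
  have colour_class: "{c \<in> PiE E (\<lambda>_. C). {e\<in>E. c e = i} = F}
             = PiE E (\<lambda>e. if e \<in> F then {i} else C - {i})" if "F \<subseteq> E" for F
    using that assms(3) by (auto simp: PiE_def Pi_def extensional_def split: if_splits)
  have weight: "(\<Sum>c\<in>PiE E (\<lambda>e. if e \<in> F then {i} else C - {i}). \<Prod>e\<in>E. q (c e))
              = q i ^ card F * (\<Sum>j\<in>C - {i}. q j) ^ card (E - F)" if "F \<subseteq> E" for F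
  proof -
    have "(\<Sum>c\<in>PiE E (\<lambda>e. if e \<in> F then {i} else C - {i}). \<Prod>e\<in>E. q (c e))
        = (\<Prod>e\<in>E. if e \<in> F then q i else (\<Sum>j\<in>C - {i}. q j))"
      using assms(1,2) by (subst prod_sum_PiE[symmetric]) (auto intro!: prod.cong)
    also have "\<dots> = q i ^ card F * (\<Sum>j\<in>C - {i}. q j) ^ card (E - F)"
    proof -
      have "E \<inter> {e. e \<in> F} = F" "E \<inter> - {e. e \<in> F} = E - F" using that by auto
      thus ?thesis using assms(1) by (simp add: prod.If_cases)
    qed
    finally show ?thesis .
  qed
  have "(\<Sum>c\<in>PiE E (\<lambda>_. C). (\<Prod>e\<in>E. q (c e)) * f {e\<in>E. c e = i})
      = (\<Sum>F\<in>Pow E. \<Sum>c\<in>{c \<in> PiE E (\<lambda>_. C). {e\<in>E. c e = i} = F}. (\<Prod>e\<in>E. q (c e)) * f F)"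
    using assms(1,2) by (subst sum.group[symmetric, where g = "\<lambda>c. {e\<in>E. c e = i}"])
      (auto simp: finite_PiE intro!: sum.cong)
  also have "\<dots> = (\<Sum>F\<in>Pow E. q i ^ card F * (\<Sum>j\<in>C - {i}. q j) ^ card (E - F) * f F)"
    using colour_class weight by (intro sum.cong) (auto simp: sum_distrib_right[symmetric])
  finally show ?thesis .
qed

lemma ex_b_matching_card_ge_expected_mu:
  assumes "finite E" "0 \<le> p" "real b * p \<le> 1"
  shows "\<exists>M\<subseteq>E. b_matching b M \<and> real b * expected_mu E p \<le> real (card M)"
proof -
  define q where "q j = (if j = 0 then 1 - real b * p else p)" for j :: nat
  define W where "W c = (\<Prod>e\<in>E. q (c e))" for c :: "'a set \<Rightarrow> nat"
  define g where "g c = real (\<Sum>i\<in>{1..b}. mu {e\<in>E. c e = i})" for c :: "'a set \<Rightarrow> nat"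
  let ?PE = "PiE E (\<lambda>_. {..b})"
  have "sum q {..b} = q 0 + sum q {1..b}" by (simp add: atMost_atLeast0 sum.atLeast_Suc_atMost)
  hence q_total: "sum q {..b} = 1" by (simp add: q_def)
  hence q_rest: "sum q ({..b} - {i}) = 1 - q i" if "i \<le> b" for i
    using that by (simp add: sum_diff1)
  have "sum W ?PE = (\<Sum>j\<in>{..b}. q j) ^ card E"
    unfolding W_def using prod_sum_PiE[of E "\<lambda>_. {..b}" "\<lambda>_. q"] assms(1) by simp
  hence W_sum: "sum W ?PE = 1" using q_total by simp
  have "(\<Sum>c\<in>?PE. W c * g c) = (\<Sum>i\<in>{1..b}. \<Sum>c\<in>?PE. W c * real (mu {e\<in>E. c e = i}))"
    unfolding g_def by (simp add: sum_distrib_left sum.swap[of _ ?PE])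
  also have "\<dots> = (\<Sum>i\<in>{1..b}. expected_mu E p)"
  proof (intro sum.cong refl)
    fix i assume i: "i \<in> {1..b}"
    hence "q i = p" "sum q ({..b} - {i}) = 1 - p" using q_rest by (auto simp: q_def)
    with i show "(\<Sum>c\<in>?PE. W c * real (mu {e\<in>E. c e = i})) = expected_mu E p"
      unfolding W_def expected_mu_def
      using sum_prod_weight_colour_class[OF assms(1) finite_atMost, where q = q and i = i
          and f = "\<lambda>F. real (mu F)"]
      by (simp only:) simp
  qed
  finally have average: "(\<Sum>c\<in>?PE. W c * g c) = real b * expected_mu E p" by simp
  have "W c \<ge> 0" for c
    unfolding W_def q_def using assms(2,3) by (intro prod_nonneg) simp
  then obtain c where "(\<Sum>c\<in>?PE. W c * g c) \<le> g c"
    using ex_ge_weighted_average[of ?PE W g] assms(1) W_sum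
    by (auto simp: finite_PiE PiE_eq_empty_iff)
  moreover obtain M where "M \<subseteq> E" "b_matching b M" "card M = (\<Sum>i\<in>{1..b}. mu {e\<in>E. c e = i})"
    using ex_b_matching_colour_classes[OF assms(1)] by blast
  ultimately show ?thesis using average unfolding g_def by (metis of_nat_eq_iff)
qed

theorem mainTheorem4:
  fixes V :: "'a set" and E :: "'a set set" and p :: real
  assumes "simple_graph V E" and "0 < p" and "p < 1"
  shows "\<exists>M\<subseteq>E. b_matching (nat \<lfloor>1 / p\<rfloor>) M \<and>
           real (card M) \<ge> (real_of_int \<lfloor>1 / p\<rfloor> - 1) * expected_mu E p"
proof -
  define b where "b = nat \<lfloor>1 / p\<rfloor>"
  have "1 \<le> \<lfloor>1 / p\<rfloor>" using assms(2,3) by (simp add: le_floor_iff field_simps)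
  hence b: "real_of_int \<lfloor>1 / p\<rfloor> = real b" using assms(2) unfolding b_def by (simp add: of_nat_nat)
  hence "real b \<le> 1 / p" using of_int_floor_le[of "1 / p"] by linarith
  hence "real b * p \<le> 1" using assms(2) by (simp add: field_simps)
  moreover have "finite E"
    using assms(1) unfolding simple_graph_def by (meson Pow_iff finite_Pow_iff finite_subset subsetI)
  ultimately obtain M where M: "M \<subseteq> E" "b_matching b M" "real b * expected_mu E p \<le> card M"
    using ex_b_matching_card_ge_expected_mu assms(2) by (meson less_imp_le)
  have "0 \<le> expected_mu E p"
    unfolding expected_mu_def using assms(2,3) by (intro sum_nonneg) auto
  hence "(real_of_int \<lfloor>1 / p\<rfloor> - 1) * expected_mu E p \<le> real b * expected_mu E p"
    by (simp add: b mult_right_mono)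
  thus ?thesis unfolding b_def[symmetric] using M by (meson order_trans)
qed

end
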